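(* Assume $d_2<h_2$ and that alternative (A) holds, namely: (i) $S_0,S_1,\dots,S_n$ are pairwise disjoint and their union is the set of all admissible $k$-words beginning with $b$; (ii) $\gamma=1$ and $\alpha_{i_1}=\cdots=\alpha_{i_n}=-1$; (iii) $B_1=\cdots=B_{n-1}$, this common block is simple, and $B_n$ differs from an initial segment of it exactly in the last symbol. Then $c^{11}_{d_1-i}=0$ for all integers $0<i<\delta$. If moreover $h_1\le h_2$, then $c^{21}_{d_1-i}=0$ for all integers $0\le i<\delta-r+1$.
   Context: Let $\mathcal{A}$ be a finite alphabet of $r$ symbols and $T=(T_{x,y})$ an irreducible $r\times r$ matrix with entries in $\{0,1\}$ (the directed graph on $\mathcal{A}$ with an edge $x\to y$ iff $T_{y,x}=1$ is strongly connected). An admissible $k$-word is a string $a_1\cdots a_k$ with $T_{a_{i+1},a_i}=1$ for all $i$. $V_k$ is the complex vector space with basis $\{[w]\}$ indexed by admissible $k$-words; $\psi_k:V_1\to V_k$ is linear with $\psi_k([a])$ the sum of $[w]$ over admissible $k$-words beginning with $a$; $T_k:V_k\to V_k$ is linear with $T_k([a_1\cdots a_k])=\sum[a_2\cdots a_kx]$ over symbols $x$ with $a_2\cdots a_kx$ admissible. For an admissible $k$-word $u=u_1\cdots u_k$, $h(u)$ is the least non-negative integer $h$ such that $u$ is the only admissible $k$-word beginning with $u_1\cdots u_{h+1}$. Fix admissible $(k+1)$-words $w_1=a_0\cdots a_k$, $w_2=b_0\cdots b_k$; put $d_1=h_1=h(a_1\cdots a_k)$, $h_2=h(b_1\cdots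 b_k)$. Let $W$ be the span of $\psi_k(V_1)$ and $T_k^i[a_1\cdots a_k]$, $0\le i\le d_1-1$ (these vectors together with the $\psi_k([a])$ form a basis of $W$, which is $T_k$-invariant). Let $d_2$ be the least non-negative integer with $T_k^{d_2}[b_1\cdots b_k]\in W$, and $\delta=h_2-d_2$. Write the unique expansion $T_k^{d_2}[b_1\cdots b_k]=\sum_{i=0}^{d_1-1}\alpha_iT_k^i[a_1\cdots a_k]+\psi_k(v)$, $v\in V_1$; let $b=b_{d_2+1}$, $\gamma$ the coefficient of $[b]$ in $v$, and $i_1<\cdots<i_n$ the indices with $\alpha_i\ne0$. Put $s_0=b_{d_2+1}\cdots b_{h_2+1}$, $s_m=a_{i_m+1}\cdots a_{h_1+1}$ ($1\le m\le n$), $S_m$ the set of admissible $k$-words beginning with $s_m$; blocks $B_m=a_{i_m+1}\cdots a_{i_{m+1}}$ ($1\le m\le n-1$), $B_n=a_{i_n+1}\cdots a_{h_1+1}$. A word is simple if it is not $A^e$ for a word $A$ and $e>1$. Correlation coefficients: for $0\le i\le d_1$, $c^{11}_{d_1-i}=1$ if $a_0a_1\cdots a_{k-i}=a_i\cdots a_k$ and $0$ otherwise; $c^{21}_{d_1-i}=1$ if $b_0\cdots b_{k-i}=a_i\cdots a_k$ and $0$ otherwise. *)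

theory Defs
  imports Complex_Main
begin

text \<open>Alphabet: a finite type 'a.  T x y = True means the matrix entry T_{x,y} = 1.
  Words are lists; the i-th symbol of a word w is w ! i (0-based).\<close>

definition irreducible01 :: "('a::finite \<Rightarrow> 'a \<Rightarrow> bool) \<Rightarrow> bool" where
  "irreducible01 T \<longleftrightarrow> (\<forall>x y. (\<lambda>a b. T b a)\<^sup>*\<^sup>* x y)"

definition admissible :: "('a \<Rightarrow> 'a \<Rightarrow> bool) \<Rightarrow> 'a list \<Rightarrow> bool" where
  "admissible T w \<longleftrightarrow> (\<forall>i. Suc i < length w \<longrightarrow> T (w ! Suc i) (w ! i))"

text \<open>Vectors of V_k are represented as functions on words, supported on the admissible
  k-words; vectors of V_1 are represented as functions on symbols.\<close>

definition bvec :: "'a list \<Rightarrow> 'a list \<Rightarrow> complex" where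
  "bvec u = (\<lambda>w. if w = u then 1 else 0)"

definition psi :: "('a \<Rightarrow> 'a \<Rightarrow> bool) \<Rightarrow> nat \<Rightarrow> ('a \<Rightarrow> complex) \<Rightarrow> 'a list \<Rightarrow> complex" where
  "psi T k v = (\<lambda>w. if admissible T w \<and> length w = k then v (hd w) else 0)"

text \<open>T_k [a_1..a_k] = sum of [a_2..a_k x] over admissible ones; hence
  (T_k f)(w) = sum of f(u) over admissible k-words u with tl u = butlast w.\<close>
definition Tk :: "('a::finite \<Rightarrow> 'a \<Rightarrow> bool) \<Rightarrow> nat \<Rightarrow> ('a list \<Rightarrow> complex) \<Rightarrow> 'a list \<Rightarrow> complex" where
  "Tk T k f = (\<lambda>w. if admissible T w \<and> length w = k
      then (\<Sum>u\<in>{u. admissible T u \<and> length u = k \<and> tl u = butlast w}. f u) else 0)"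

definition hh :: "('a \<Rightarrow> 'a \<Rightarrow> bool) \<Rightarrow> 'a list \<Rightarrow> nat" where
  "hh T u = (LEAST h. \<forall>w. admissible T w \<and> length w = length u \<and> take (Suc h) w = take (Suc h) u
      \<longrightarrow> w = u)"

definition inW :: "('a::finite \<Rightarrow> 'a \<Rightarrow> bool) \<Rightarrow> nat \<Rightarrow> 'a list \<Rightarrow> nat \<Rightarrow> ('a list \<Rightarrow> complex) \<Rightarrow> bool" where
  "inW T k a d1 x \<longleftrightarrow> (\<exists>\<alpha> v. \<forall>w. x w =
      (\<Sum>i<d1. \<alpha> i * (Tk T k ^^ i) (bvec a) w) + psi T k v w)"

definition simple_word :: "'a list \<Rightarrow> bool" where
  "simple_word w \<longleftrightarrow> \<not> (\<exists>A e. e > (1::nat) \<and> w = concat (replicate e A))"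

definition words_from :: "('a \<Rightarrow> 'a \<Rightarrow> bool) \<Rightarrow> nat \<Rightarrow> 'a list \<Rightarrow> 'a list set" where
  "words_from T k s = {w. admissible T w \<and> length w = k \<and> take (length s) w = s}"

text \<open>Correlation coefficient, indexed by the shift i (the paper's subscript is d1 - i):
  corr x y i = 1 iff x_0 .. x_{k-i} = y_i .. y_k, where |x| = |y| = k+1.\<close>
definition corr :: "'a list \<Rightarrow> 'a list \<Rightarrow> nat \<Rightarrow> nat" where
  "corr x y i = (if take (length x - i) x = drop i y then 1 else 0)"

end

(*
  Let e1 e2 = a_h1 a_(h1+1) be the step at which a_1 ... a_k leaves its last branching symbol,
  and fix a successor function f on the alphabet that never takes the step e1 -> e2. Every word
  of S_m with m > 0 contains the step e1 e2, whereas f-walks avoid it. Testing the covering of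
  the words beginning with b by the S_m on two such words -- the f-walk from b, and the word
  that follows s_0 up to its branching position and then leaves it and continues along f --
  shows that s_0 avoids e1 e2 and that some s_m equals s_0 with its last symbol replaced by e2.
  So the delta symbols of w_1 ending at a_h1 form an e1e2-free window, and a nonzero
  correlation of shift i would carry the step e1 e2 of w_1 into a window of this kind.
  For c^21 a large shift is excluded by counting: beyond a_h1 the word a_1 ... a_k is forced,
  and by irreducibility its forced part has no repeated symbol, so k - h1 <= r.
*)

theory Submission
  imports Defs "HOL-Library.Sublist"
begin

lemma admissible_iff_successively: "admissible T w \<longleftrightarrow> successively (\<lambda>x y. T y x) w"
  by (simp add: admissible_def successively_conv_nth)

lemma admissible_take: "admissible T w \<Longrightarrow> admissible T (take n w)"
  by (auto simp: admissible_def)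

lemma admissible_drop: "admissible T w \<Longrightarrow> admissible T (drop n w)"
proof (unfold admissible_def, intro allI impI)
  fix i assume "\<forall>i. Suc i < length w \<longrightarrow> T (w ! Suc i) (w ! i)" "Suc i < length (drop n w)"
  then show "T (drop n w ! Suc i) (drop n w ! i)" by (simp add: add.commute[of n])
qed

fun walk :: "('a \<Rightarrow> 'a) \<Rightarrow> 'a \<Rightarrow> nat \<Rightarrow> 'a list" where
  "walk f x 0 = []"
| "walk f x (Suc m) = f x # walk f (f x) m"

lemma length_walk [simp]: "length (walk f x m) = m"
  by (induction m arbitrary: x) auto

lemma successively_Cons_walk: "(\<And>z. R z (f z)) \<Longrightarrow> successively R (x # walk f x m)"
  by (induction m arbitrary: x) auto

lemma admissible_append_walk:
  assumes "\<forall>z. T (f z) z" "admissible T xs" "xs \<noteq> []" "T y (last xs)"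
  shows "admissible T (xs @ y # walk f y m)"
  using assms successively_Cons_walk[of "\<lambda>x y. T y x" f y m]
  by (simp add: admissible_iff_successively successively_append_iff)

lemma mem_words_from_iff:
  "w \<in> words_from T k s \<longleftrightarrow> admissible T w \<and> length w = k \<and> prefix s w"
proof -
  have "take (length s) w = s \<longleftrightarrow> prefix s w"
    by (metis append_eq_conv_conj append_take_drop_id prefix_def)
  then show ?thesis by (auto simp: words_from_def)
qed

lemma successively_prefix: "prefix xs ys \<Longrightarrow> successively R ys \<Longrightarrow> successively R xs"
  by (auto simp: prefix_def successively_append_iff)

lemma prefix_edge_at_junction:
  assumes "prefix (p @ [a, b]) (xs @ y # ys)" "successively R xs" "successively R (y # ys)"
    and "\<not> R a b"
  shows "xs = p @ [a] \<and> y = b"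
proof -
  have no_edge: "\<not> successively R (zs' @ [a, b] @ zs)" for zs' zs
    using assms(4) by (simp add: successively_append_iff)
  have "\<not> prefix (p @ [a, b]) xs"
    using no_edge assms(2) successively_prefix by (metis append.assoc prefixE)
  then obtain us where us: "p @ [a, b] = xs @ us" "prefix us (y # ys)"
    using assms(1) unfolding prefix_append by blast
  show ?thesis
  proof (cases us rule: rev_cases)
    case Nil
    then show ?thesis using us(1) no_edge[of p "[]"] assms(2) by simp
  next
    case (snoc us' c)
    show ?thesis
    proof (cases us' rule: rev_cases)
      case Nil
      then show ?thesis using us snoc by simp
    next
      case (snoc us'' c')
      then have "us = us'' @ [a, b]" using us(1) \<open>us = us' @ [c]\<close> by simp
      then have "successively R (us'' @ [a, b] @ [])"
        using successively_prefix[OF us(2) assms(3)] by simp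
      with no_edge show ?thesis by blast
    qed
  qed
qed

lemma drop_take_Suc_Suc_eq:
  assumes "i \<le> j" "Suc j < length w"
  shows "drop i (take (j + 2) w) = take (Suc j - i) (drop i w) @ [w ! Suc j]"
proof -
  have "take (Suc (Suc j)) w = take (Suc j) w @ [w ! Suc j]"
    using assms(2) by (simp add: take_Suc_conv_app_nth)
  then show ?thesis using assms by (simp add: numeral_2_eq_2 drop_take)
qed

lemma suffix_drop_take_Suc_Suc:
  assumes "i \<le> j" "Suc j < length w"
  shows "suffix [w ! j, w ! Suc j] (drop i (take (j + 2) w))"
proof -
  have "take (Suc (Suc j)) w = take j w @ [w ! j, w ! Suc j]"
    using assms(2) by (simp add: take_Suc_conv_app_nth)
  then show ?thesis using assms by (simp add: numeral_2_eq_2 suffix_def)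
qed

lemma hh_Nil: "hh T [] = 0"
  unfolding hh_def by (rule Least_eq_0) simp

lemma hh_less_length:
  assumes "u \<noteq> []"
  shows "hh T u < length u"
proof -
  have "hh T u \<le> length u - 1"
    unfolding hh_def by (rule Least_le) (use assms in auto)
  then show ?thesis using assms by (cases u) auto
qed

lemma hh_determines:
  assumes "u \<noteq> []" "admissible T w" "length w = length u"
    and "take (Suc (hh T u)) w = take (Suc (hh T u)) u"
  shows "w = u"
proof -
  have "\<forall>w. admissible T w \<and> length w = length u \<and> take (Suc (hh T u)) w = take (Suc (hh T u)) u
      \<longrightarrow> w = u"
    unfolding hh_def by (rule LeastI[of _ "length u - 1"]) (use assms(1) in auto)
  then show ?thesis using assms(2-4) by blast
qed

lemma hh_branch:
  assumes i: "hh T u = Suc i"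
  shows "\<exists>y. T y (u ! i) \<and> y \<noteq> u ! Suc i"
proof -
  have u: "u \<noteq> []" using i by (auto simp: hh_Nil)
  have "\<not> (\<forall>w. admissible T w \<and> length w = length u \<and> take (Suc i) w = take (Suc i) u
      \<longrightarrow> w = u)"
    unfolding hh_def by (rule not_less_Least) (use i in \<open>simp add: hh_def\<close>)
  then obtain w where w: "admissible T w" "length w = length u" "take (Suc i) w = take (Suc i) u"
    "w \<noteq> u"
    by blast
  have si: "Suc i < length u" using hh_less_length[OF u, of T] i by simp
  have "take (Suc (Suc i)) w \<noteq> take (Suc (Suc i)) u"
    using hh_determines[OF u w(1,2)] w(4) i by auto
  then have "w ! Suc i \<noteq> u ! Suc i"
    using w(2,3) si by (simp add: take_Suc_conv_app_nth)
  moreover have "w ! i = u ! i"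
    using w(3) by (metis lessI nth_take)
  moreover have "T (w ! Suc i) (w ! i)"
    using w(1,2) si unfolding admissible_def by simp
  ultimately show ?thesis by auto
qed

lemma hh_tl_branch:
  assumes "0 < hh T (tl w)"
  shows "\<exists>y. T y (w ! hh T (tl w)) \<and> y \<noteq> w ! Suc (hh T (tl w))"
proof -
  obtain i where i: "hh T (tl w) = Suc i" using assms gr0_implies_Suc by blast
  have "tl w \<noteq> []" using assms by (auto simp: hh_Nil)
  then have "Suc i < length (tl w)" using hh_less_length[of "tl w" T] i by simp
  then show ?thesis using hh_branch[OF i] i by (simp add: nth_tl)
qed

lemma hh_successor_unique:
  assumes f: "\<forall>z. T (f z) z" and u: "admissible T u"
    and j: "hh T u \<le> j" "Suc j < length u" and y: "T y (u ! j)"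
  shows "y = u ! Suc j"
proof -
  define w where "w = take (Suc j) u @ y # walk f y (length u - Suc (Suc j))"
  have "last (take (Suc j) u) = u ! j"
    using j(2) by (simp add: take_Suc_conv_app_nth)
  then have "admissible T w"
    unfolding w_def using f admissible_take[OF u] y j(2)
    by (intro admissible_append_walk) auto
  moreover have "length w = length u" "take (Suc (hh T u)) w = take (Suc (hh T u)) u"
    using j by (simp_all add: w_def take_append min_def)
  ultimately have "w = u"
    using hh_determines j(2) by (metis list.size(3) not_less0)
  moreover have "w ! Suc j = y"
    using j(2) by (simp add: w_def nth_append)
  ultimately show ?thesis by simp
qed

lemma irreducible01_successor_function:
  assumes irr: "irreducible01 T" and edge: "T y0 x0"
  shows "\<exists>f. (\<forall>x. T (f x) x) \<and> f x0 = y0"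
proof -
  have "\<exists>y. T y x" for x
  proof -
    have "(\<lambda>a b. T b a)\<^sup>*\<^sup>* x x0" using irr by (simp add: irreducible01_def)
    then show ?thesis using edge by (cases rule: converse_rtranclpE) auto
  qed
  then have "\<forall>x. T (if x = x0 then y0 else SOME y. T y x) x"
    using edge by (auto intro: someI_ex)
  then show ?thesis by (intro exI[of _ "\<lambda>x. if x = x0 then y0 else SOME y. T y x"]) simp
qed

lemma inj_on_forced_path:
  assumes forced: "\<And>j y. j < N \<Longrightarrow> T y (x j) \<Longrightarrow> y = x (Suc j)"
    and reach: "(\<lambda>a b. T b a)\<^sup>*\<^sup>* (x 0) e" and e: "e \<notin> x ` {..<N}"
  shows "inj_on x {..<N}"
proof (rule ccontr)
  assume "\<not> inj_on x {..<N}"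
  then obtain p1 p2 where p: "p1 < p2" "p2 < N" "x p1 = x p2"
    unfolding inj_on_def by (metis lessThan_iff linorder_neqE_nat)
  let ?S = "x ` {..<p2}"
  \<comment> \<open>the forced steps from inside ?S lead back into ?S, the last one via x p2 = x p1\<close>
  have closed: "z \<in> ?S" if "v \<in> ?S" "T z v" for v z
  proof -
    obtain j where j: "j < p2" "v = x j" using \<open>v \<in> ?S\<close> by blast
    then have z: "z = x (Suc j)" using forced p(2) \<open>T z v\<close> by simp
    show ?thesis
    proof (cases "Suc j < p2")
      case True
      then show ?thesis using z by auto
    next
      case False
      then have "Suc j = p2" using j(1) by simp
      then have "z = x p1" using z p(3) by simp
      then show ?thesis using p(1) by auto
    qed
  qed
  from reach have "e \<in> ?S"
    by (induction rule: rtranclp_induct) (use p(1) closed in auto)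
  then show False using e p(2) by auto
qed

lemma hh_card_bound:
  fixes u :: "'a::finite list"
  assumes irr: "irreducible01 T" and u: "admissible T u" and h: "0 < hh T u"
  shows "length u - hh T u \<le> card (UNIV :: 'a set)"
proof -
  obtain i where i: "hh T u = Suc i" using h gr0_implies_Suc by blast
  define N where "N = length u - Suc (Suc i)"
  define x where "x = (\<lambda>j. u ! (Suc i + j))"
  have "u \<noteq> []" using h by (auto simp: hh_Nil)
  then have hu: "Suc i < length u" using hh_less_length[of u T] i by simp
  obtain y1 where y1: "T y1 (u ! i)" "y1 \<noteq> u ! Suc i" using hh_branch[OF i] by blast
  obtain f where f: "\<forall>z. T (f z) z" using irreducible01_successor_function[OF irr y1(1)] by blast
  have forced: "y = x (Suc j)" if "j < N" "T y (x j)" for j y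
    using hh_successor_unique[OF f u, of "Suc i + j" y] that i by (simp add: x_def N_def)
  have e: "u ! i \<notin> x ` {..<N}"
  proof
    assume "u ! i \<in> x ` {..<N}"
    then obtain j where j: "j < N" "u ! i = x j" by blast
    have "T (u ! Suc i) (u ! i)" using u hu unfolding admissible_def by simp
    then show False using forced[OF j(1)] y1 j(2) by metis
  qed
  moreover have "(\<lambda>a b. T b a)\<^sup>*\<^sup>* (x 0) (u ! i)" using irr by (simp add: irreducible01_def)
  ultimately have "inj_on x {..<N}" using forced inj_on_forced_path by metis
  then have "card (insert (u ! i) (x ` {..<N})) = Suc N"
    using e by (simp add: card_image)
  moreover have "card (insert (u ! i) (x ` {..<N})) \<le> card (UNIV :: 'a set)"
    by (rule card_mono) auto
  ultimately show ?thesis using hu i by (simp add: N_def)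
qed

lemma corr_nth:
  assumes "corr y x p \<noteq> 0" "length y = length x" "p + j < length x"
  shows "y ! j = x ! (p + j)"
proof -
  have "take (length y - p) y = drop p x" using assms(1) by (simp add: corr_def split: if_splits)
  then have "take (length y - p) y ! j = drop p x ! j" by simp
  then show ?thesis using assms(2,3) by simp
qed

lemma corr_eq_0_if_edge_free_window:
  assumes len: "length y = length x"
    and window: "successively R (take l (drop d y))"
    and edge: "\<not> R (x ! h) (x ! Suc h)" "Suc h < length x"
    and pos: "d + p \<le> h" "Suc h < d + l + p"
  shows "corr y x p = 0"
proof (rule ccontr)
  assume corr: "corr y x p \<noteq> 0"
  define t where "t = h - p - d"
  have t: "Suc t < l" "d + Suc t < length y" "d + t = h - p"
    using pos edge(2) len by (simp_all add: t_def)
  have "R (take l (drop d y) ! t) (take l (drop d y) ! Suc t)"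
    by (rule successively_nth[OF window]) (use t in simp)
  then have "R (y ! (h - p)) (y ! Suc (h - p))"
    using t by simp
  moreover have "y ! (h - p) = x ! h" "y ! Suc (h - p) = x ! Suc h"
    using corr_nth[OF corr len] pos edge(2) by (simp_all add: Suc_diff_le)
  ultimately show False using edge(1) by simp
qed

lemma cover_by_prefixes_forces_edge:
  fixes s :: "nat \<Rightarrow> 'a list"
  assumes f: "\<forall>x. T (f x) x" "f e1 \<noteq> e2"
    and s0: "s 0 = q @ [c]" "admissible T (q @ [c])" "q \<noteq> []" "length q < k"
    and branch: "T y (last q)" "y \<noteq> c"
    and edges: "\<forall>m\<in>{1..n}. suffix [e1, e2] (s m)"
    and cover: "words_from T k [hd q] \<subseteq> (\<Union>m\<le>n. words_from T k (s m))"
  shows "successively (\<lambda>x z. (x, z) \<noteq> (e1, e2)) (q @ [c]) \<and> (\<exists>m\<in>{1..n}. s m = q @ [e2])"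
proof -
  let ?R = "\<lambda>x z. (x, z) \<noteq> (e1, e2)"
  have R_walk: "successively ?R (x # walk f x r)" for x r
    by (rule successively_Cons_walk) (use f(2) in auto)
  have cover_m: "\<exists>m\<in>{1..n}. prefix (s m) w"
    if w: "w \<in> words_from T k [hd q]" "\<not> prefix (s 0) w" for w
  proof -
    obtain m where m: "m \<le> n" "prefix (s m) w"
      using cover w(1) by (auto simp: mem_words_from_iff)
    moreover have "1 \<le> m" using m(2) w(2) by (cases m) auto
    ultimately show ?thesis by auto
  qed
  have edge_free: "\<not> prefix (s m) w" if m: "m \<in> {1..n}" and w: "successively ?R w" for m w
  proof
    assume "prefix (s m) w"
    moreover obtain p where "s m = p @ [e1, e2]" using edges m unfolding suffix_def by blast
    ultimately have "successively ?R (p @ [e1, e2] @ [])" using w successively_prefix by simp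
    then show False by (simp add: successively_append_iff)
  qed
  have k: "1 \<le> k" using s0(4) by simp
  define w0 where "w0 = hd q # walk f (hd q) (k - 1)"
  have w0: "w0 \<in> words_from T k [hd q]"
    using k successively_Cons_walk[of "\<lambda>x y. T y x" f]
    by (simp add: w0_def mem_words_from_iff admissible_iff_successively f(1))
  have "prefix (s 0) w0"
  proof (rule ccontr)
    assume "\<not> prefix (s 0) w0"
    then obtain m where "m \<in> {1..n}" "prefix (s m) w0" using cover_m w0 by blast
    then show False using edge_free R_walk unfolding w0_def by blast
  qed
  then have free: "successively ?R (q @ [c])"
    using R_walk successively_prefix s0(1) unfolding w0_def by metis
  define P where "P = q @ y # walk f y (k - Suc (length q))"
  have "admissible T q" using admissible_take[OF s0(2), of "length q"] by simp
  then have "P \<in> words_from T k [hd q]"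
    using admissible_append_walk[OF f(1) _ s0(3) branch(1)] s0(3,4)
    by (simp add: P_def mem_words_from_iff prefix_def) (metis hd_Cons_tl append_Cons)
  moreover have "\<not> prefix (s 0) P" using s0(1) branch(2) by (simp add: P_def)
  ultimately obtain m where m: "m \<in> {1..n}" "prefix (s m) P" using cover_m by blast
  obtain p where p: "s m = p @ [e1, e2]" using edges m(1) unfolding suffix_def by blast
  have "q = p @ [e1] \<and> y = e2"
  proof (rule prefix_edge_at_junction)
    show "prefix (p @ [e1, e2]) (q @ y # walk f y (k - Suc (length q)))"
      using m(2) p by (simp add: P_def)
    show "successively ?R q" using free by (simp add: successively_append_iff)
  qed (use R_walk in auto)
  then show ?thesis using free m(1) p by auto
qed

theorem corollary3p3:
  fixes T :: "'a::finite \<Rightarrow> 'a \<Rightarrow> bool"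
    and k :: nat and wa wb :: "'a list"
    and \<alpha> :: "nat \<Rightarrow> complex" and v :: "'a \<Rightarrow> complex"
  assumes irr: "irreducible01 T"
    and k: "k \<ge> 1"
    and wa: "admissible T wa" "length wa = Suc k"
    and wb: "admissible T wb" "length wb = Suc k"
  defines "d1 \<equiv> hh T (tl wa)"
    and "h1 \<equiv> hh T (tl wa)"
    and "h2 \<equiv> hh T (tl wb)"
  defines "d2 \<equiv> LEAST d. inW T k (tl wa) d1 ((Tk T k ^^ d) (bvec (tl wb)))"
  defines "\<delta> \<equiv> h2 - d2"
  assumes expansion: "\<forall>w. (Tk T k ^^ d2) (bvec (tl wb)) w =
      (\<Sum>i<d1. \<alpha> i * (Tk T k ^^ i) (bvec (tl wa)) w) + psi T k v w"
  defines "b \<equiv> wb ! Suc d2"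
    and "\<gamma> \<equiv> v (wb ! Suc d2)"
    and "idx \<equiv> sorted_list_of_set {i. i < d1 \<and> \<alpha> i \<noteq> 0}"
  defines "n \<equiv> length idx"
  defines "s \<equiv> (\<lambda>m. if m = 0 then take (h2 - d2 + 1) (drop (Suc d2) wb)
                    else drop (Suc (idx ! (m - 1))) (take (h1 + 2) wa))"
  defines "B \<equiv> (\<lambda>m. if m < n then drop (Suc (idx ! (m - 1))) (take (Suc (idx ! m)) wa)
                    else drop (Suc (idx ! (n - 1))) (take (h1 + 2) wa))"
  assumes d2_lt: "d2 < h2"
    and A_i: "\<forall>m m'. m \<le> n \<longrightarrow> m' \<le> n \<longrightarrow> m \<noteq> m' \<longrightarrow>
                 words_from T k (s m) \<inter> words_from T k (s m') = {}"
             "(\<Union>m\<le>n. words_from T k (s m)) = words_from T k [b]"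
    and A_ii: "\<gamma> = 1" "\<forall>i<d1. \<alpha> i \<noteq> 0 \<longrightarrow> \<alpha> i = -1"
    and A_iii: "n \<ge> 1"
       "\<exists>C. (\<forall>m. 1 \<le> m \<and> m \<le> n - 1 \<longrightarrow> B m = C) \<and> simple_word C \<and>
            B n \<noteq> [] \<and> length (B n) \<le> length C \<and>
            take (length (B n) - 1) (B n) = take (length (B n) - 1) C \<and>
            B n ! (length (B n) - 1) \<noteq> C ! (length (B n) - 1)"
  shows "(\<forall>i. 0 < i \<and> i < \<delta> \<longrightarrow> corr wa wa i = 0) \<and>
         (h1 \<le> h2 \<longrightarrow> (\<forall>i. int i < int \<delta> - int (card (UNIV :: 'a set)) + 1 \<longrightarrow> corr wb wa i = 0))"
proof -
  let ?R = "\<lambda>x z. (x, z) \<noteq> (wa ! h1, wa ! Suc h1)"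
  have lengths: "length (tl wa) = k" "length (tl wb) = k" using wa(2) wb(2) by simp_all
  then have h1k: "h1 < k" and h2k: "h2 < k"
    using hh_less_length k unfolding h1_def h2_def by (metis list.size(3) not_one_le_zero)+
  have idx: "idx ! (m - 1) < h1" if "m \<in> {1..n}" for m
  proof -
    have "set idx = {i. i < d1 \<and> \<alpha> i \<noteq> 0}" by (simp add: idx_def)
    moreover have "idx ! (m - 1) \<in> set idx" using that by (auto simp: n_def intro: nth_mem)
    ultimately show ?thesis by (simp add: d1_def h1_def)
  qed
  then have h1_pos: "0 < h1" using A_iii(1) by fastforce
  obtain y1 where "T y1 (wa ! h1)" "y1 \<noteq> wa ! Suc h1"
    using hh_tl_branch[of T wa] h1_pos by (auto simp: h1_def)
  then obtain f where f: "\<forall>x. T (f x) x" "f (wa ! h1) \<noteq> wa ! Suc h1"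
    using irreducible01_successor_function[OF irr] by metis
  obtain yb where yb: "T yb (wb ! h2)" "yb \<noteq> wb ! Suc h2"
    using hh_tl_branch[of T wb] d2_lt by (auto simp: h2_def)
  define q where "q = take \<delta> (drop (Suc d2) wb)"
  have q: "length q = \<delta>" "0 < \<delta>" "h2 = d2 + \<delta>"
    using h2k d2_lt wb(2) by (simp_all add: q_def \<delta>_def)
  have window_b: "take (Suc \<delta>) (drop (Suc d2) wb) = q @ [wb ! Suc h2]"
    using q(3) h2k wb(2) by (simp add: q_def take_Suc_conv_app_nth)
  then have s0: "s 0 = q @ [wb ! Suc h2]" by (simp add: s_def \<delta>_def)
  have "successively ?R (q @ [wb ! Suc h2]) \<and> (\<exists>m\<in>{1..n}. s m = q @ [wa ! Suc h1])"
  proof (rule cover_by_prefixes_forces_edge[where T = T and f = f and s = s, OF f s0])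
    show "admissible T (q @ [wb ! Suc h2])"
      using admissible_take[OF admissible_drop[OF wb(1)]] window_b by metis
    show "q \<noteq> []" "length q < k" using q h2k by auto
    show "T yb (last q)" using yb(1) q by (simp add: q_def last_conv_nth wb(2))
    show "yb \<noteq> wb ! Suc h2" by (fact yb(2))
    show "\<forall>m\<in>{1..n}. suffix [wa ! h1, wa ! Suc h1] (s m)"
    proof
      fix m assume "m \<in> {1..n}"
      then show "suffix [wa ! h1, wa ! Suc h1] (s m)"
        using idx[of m] suffix_drop_take_Suc_Suc[of "Suc (idx ! (m - 1))" h1 wa] h1k wa(2)
        by (simp add: s_def)
    qed
    show "words_from T k [hd q] \<subseteq> (\<Union>m\<le>n. words_from T k (s m))"
      using A_i(2) q by (simp add: q_def b_def hd_conv_nth wb(2))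
  qed
  then obtain m where s0_free: "successively ?R (q @ [wb ! Suc h2])"
    and m: "m \<in> {1..n}" "s m = q @ [wa ! Suc h1]" by blast
  define i where "i = idx ! (m - 1)"
  have "i < h1" using idx m(1) by (simp add: i_def)
  then have window_a: "take (h1 - i) (drop (Suc i) wa) = q"
    using m h1k wa(2) drop_take_Suc_Suc_eq[of "Suc i" h1 wa] by (simp add: s_def i_def)
  have corr_wa_wa: "corr wa wa p = 0" if "0 < p" "p < \<delta>" for p
  proof (rule corr_eq_0_if_edge_free_window)
    show "successively ?R (take (h1 - i) (drop (Suc i) wa))"
      using s0_free window_a by (simp add: successively_append_iff)
  qed (use that window_a q \<open>i < h1\<close> h1k wa(2) in auto)
  have corr_wb_wa: "corr wb wa p = 0" if "h1 \<le> h2" "p + card (UNIV :: 'a set) \<le> \<delta>" for p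
  proof -
    have "admissible T (tl wa)" using admissible_drop[OF wa(1), of 1] by (simp add: drop_Suc)
    then have "k - h1 \<le> card (UNIV :: 'a set)"
      using hh_card_bound[OF irr _ h1_pos[unfolded h1_def]] lengths by (simp add: h1_def)
    then have "p + d2 < h1" using that h2k q(3) by linarith
    moreover have "successively ?R (take (Suc \<delta>) (drop (Suc d2) wb))"
      using s0_free window_b by simp
    ultimately show ?thesis
      by (intro corr_eq_0_if_edge_free_window) (use that q h1k wa(2) wb(2) in auto)
  qed
  show ?thesis using corr_wa_wa corr_wb_wa by force
qed

end
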